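(* If the aggregate channel matrix $\mathbf{H} = [\mathbf{h}_{1},\dots,\mathbf{h}_{K}] \in \mathbb{C}^{N \times K}$ has full column rank, then there always exists a beamforming point $\{\mathbf{w}_m\}_{m=1}^M$ that satisfies the SINR constraints $\frac{\lvert \mathbf{h}_k^H \mathbf{w}_m \rvert^2}{\sum_{j \neq m} \lvert \mathbf{h}_k^H \mathbf{w}_j \rvert^2 + \sigma_k^2} \geq \gamma_k$ for all $k \in \mathcal{G}_m$, $m \in \mathcal{M}$, and it is given by $$\mathbf{W} = [\mathbf{w}_1, \mathbf{w}_2, \dots, \mathbf{w}_M] = \mathbf{H}(\mathbf{H}^H\mathbf{H})^{-1} \mathbf{A},$$ where $\mathbf{A}$ is a $K \times M$ complex-valued matrix with $(k,m)$-th element $A_{k,m} = \sqrt{\gamma_k \sigma_k^2}\, e^{j \theta_{k}}$ if $k \in \mathcal{G}_m$ and $A_{k,m}=0$ otherwise, with $\theta_{k} \in [0, 2\pi]$ arbitrary. Further, if this point $\mathbf{W} = \mathbf{H}(\mathbf{H}^H\mathbf{H})^{-1} \mathbf{A}$ also satisfies the per-antenna peak power constraints $\sum_{m=1}^M \mathbf{w}_m^H \mathbf{R}_n \mathbf{w}_m \leq P_n$ for all $n \in \mathcal{N}$, then it is a feasible solution of the QoS problem (minimize $\sum_{m=1}^M \lVert \mathbf{w}_m \rVert_2^2$ subject to these SINR constraints and per-antenna peak power constraints).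
   Context: A transmitter with $N$ antennas serves $M$ multicast groups of single-antenna users; $\mathcal{G}_m$ is the set of users in group $m$, $\mathcal{M}=\{1,\dots,M\}$, $\mathcal{K}=\{1,\dots,K\}$ is the set of all users, the groups are disjoint and their union is $\mathcal{K}$, and $\mathcal{N}=\{1,\dots,N\}$. $\mathbf{w}_m \in \mathbb{C}^N$ is the beamforming vector of group $m$, $\mathbf{h}_k \in \mathbb{C}^N$ the channel of user $k$, $\sigma_k^2>0$ the noise variance at user $k$, $\gamma_k$ the SINR target of user $k$, $P_n$ the peak power of antenna $n$, and $\mathbf{R}_n \in \{0,1\}^{N\times N}$ the all-zero matrix except a 1 at the $n$-th diagonal entry. The SINR of user $k \in \mathcal{G}_m$ is $\lvert \mathbf{h}_k^H \mathbf{w}_m \rvert^2 / (\sum_{j \neq m} \lvert \mathbf{h}_k^H \mathbf{w}_j \rvert^2 + \sigma_k^2)$. *)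

theory Defs
  imports "HOL-Analysis.Analysis"
begin

definition herm :: "complex^'c^'r \<Rightarrow> complex^'r^'c" where
  "herm A = (\<chi> i j. cnj (A $ j $ i))"

definition hinner :: "complex^'n \<Rightarrow> complex^'n \<Rightarrow> complex" where
  "hinner x y = (\<Sum>i\<in>UNIV. cnj (x $ i) * y $ i)"

definition Rsel :: "'n \<Rightarrow> complex^'n^'n" where
  "Rsel n = (\<chi> i j. if i = n \<and> j = n then 1 else 0)"

definition sinr :: "complex^'k^'n \<Rightarrow> complex^'m^'n \<Rightarrow> ('k \<Rightarrow> real) \<Rightarrow> 'k \<Rightarrow> 'm \<Rightarrow> real" where
  "sinr H W sigma2 k m =
     (cmod (hinner (column k H) (column m W)))\<^sup>2 /
     ((\<Sum>j\<in>UNIV - {m}. (cmod (hinner (column k H) (column j W)))\<^sup>2) + sigma2 k)"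

definition sinr_ok :: "complex^'k^'n \<Rightarrow> complex^'m^'n \<Rightarrow> ('k \<Rightarrow> real) \<Rightarrow> ('k \<Rightarrow> real)
    \<Rightarrow> ('m \<Rightarrow> 'k set) \<Rightarrow> bool" where
  "sinr_ok H W sigma2 gamma G = (\<forall>m. \<forall>k\<in>G m. sinr H W sigma2 k m \<ge> gamma k)"

text \<open>Per-antenna peak power: sum_m w_m^H R_n w_m \<le> P_n (the quantity is real).\<close>
definition power_ok :: "complex^'m^'n \<Rightarrow> ('n \<Rightarrow> real) \<Rightarrow> bool" where
  "power_ok W P = (\<forall>n. Re (\<Sum>m\<in>UNIV. hinner (column m W) (Rsel n *v column m W)) \<le> P n)"

definition qos_feasible :: "complex^'k^'n \<Rightarrow> ('k \<Rightarrow> real) \<Rightarrow> ('k \<Rightarrow> real)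
    \<Rightarrow> ('m \<Rightarrow> 'k set) \<Rightarrow> ('n \<Rightarrow> real) \<Rightarrow> complex^'m^'n \<Rightarrow> bool" where
  "qos_feasible H sigma2 gamma G P W \<longleftrightarrow> sinr_ok H W sigma2 gamma G \<and> power_ok W P"

end

theory Submission
  imports Defs
begin

text \<open>Zero-forcing: for full column rank the Gram matrix \<open>H\<^sup>H H\<close> is invertible, so
  \<open>W = H (H\<^sup>H H)\<^sup>-\<^sup>1 A\<close> satisfies \<open>H\<^sup>H W = A\<close>, i.e. \<open>h\<^sub>k\<^sup>H w\<^sub>m = A\<^sub>k\<^sub>m\<close>. Since \<open>A\<close> vanishes
  off the group pattern, all inter-group interference is cancelled and the SINR of
  user \<open>k\<close> is \<open>\<bar>A\<^sub>k\<^sub>m\<bar>\<^sup>2 / \<sigma>\<^sub>k\<^sup>2 = \<gamma>\<^sub>k\<close>.\<close>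

lemma herm_matrix_mult_eq_hinner_columns:
  "(herm H ** W) $ k $ m = hinner (column k H) (column m W)"
  by (simp add: hinner_def column_def herm_def matrix_matrix_mult_def)

lemma hinner_self_eq_zero_iff: "hinner y y = 0 \<longleftrightarrow> y = 0"
proof -
  have "hinner y y = of_real (\<Sum>i\<in>UNIV. (cmod (y $ i))\<^sup>2)"
    unfolding hinner_def of_real_sum
    by (rule sum.cong[OF refl]) (metis complex_norm_square mult.commute of_real_power)
  then have "hinner y y = 0 \<longleftrightarrow> (\<forall>i\<in>UNIV. (cmod (y $ i))\<^sup>2 = 0)"
    by (simp only: of_real_eq_0_iff sum_nonneg_eq_0_iff finite zero_le_power2)
  then show ?thesis by (simp add: vec_eq_iff)
qed

lemma hinner_gram: "hinner x ((herm H ** H) *v x) = hinner (H *v x) (H *v x)"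
proof -
  have "hinner x ((herm H ** H) *v x) = hinner x (herm H *v (H *v x))"
    by (simp add: matrix_vector_mul_assoc)
  also have "\<dots> = (\<Sum>j\<in>UNIV. \<Sum>i\<in>UNIV. cnj (x $ j) * cnj (H $ i $ j) * (H *v x) $ i)"
    by (simp add: hinner_def matrix_vector_mult_def herm_def sum_distrib_left mult.assoc)
  also have "\<dots> = (\<Sum>i\<in>UNIV. \<Sum>j\<in>UNIV. cnj (x $ j) * cnj (H $ i $ j) * (H *v x) $ i)"
    by (rule sum.swap)
  also have "\<dots> = hinner (H *v x) (H *v x)"
    unfolding hinner_def
  proof (rule sum.cong[OF refl])
    fix i
    have "cnj ((H *v x) $ i) = (\<Sum>j\<in>UNIV. cnj (x $ j) * cnj (H $ i $ j))"
      by (simp add: matrix_vector_mult_def mult.commute)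
    then show "(\<Sum>j\<in>UNIV. cnj (x $ j) * cnj (H $ i $ j) * (H *v x) $ i)
        = cnj ((H *v x) $ i) * (H *v x) $ i"
      by (simp add: sum_distrib_right)
  qed
  finally show ?thesis .
qed

lemma inj_matrix_vector_mult_if_rank_eq_card_cols:
  fixes H :: "'a::field^'k::finite^'n::finite"
  assumes "rank H = CARD('k)"
  shows "inj ((*v) H)"
proof -
  have "vec.dim (rows H) = vec.dimension TYPE('a) TYPE('k)"
    using assms by (simp add: row_rank_def_gen vec.dimension_def card_cart_basis)
  then have "vec.span (rows H) = UNIV" by (simp add: vec.dim_eq_full)
  then show ?thesis
    using matrix_left_invertible_span_rows_gen matrix_left_invertible_injective by blast
qed

lemma invertible_gram_if_rank_eq_card_cols:
  fixes H :: "complex^'k::finite^'n::finite"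
  assumes "rank H = CARD('k)"
  shows "invertible (herm H ** H)"
proof -
  have "x = 0" if "(herm H ** H) *v x = 0" for x
  proof -
    have "hinner (H *v x) (H *v x) = 0"
      using hinner_gram[of x H] that by (simp add: hinner_def)
    then have "H *v x = 0" by (simp add: hinner_self_eq_zero_iff)
    then show "x = 0"
      using inj_matrix_vector_mult_if_rank_eq_card_cols[OF assms]
      by (metis matrix_vector_mult_0_right injD)
  qed
  then show ?thesis
    using invertible_left_inverse matrix_left_invertible_ker by blast
qed

lemma matrix_inv_right:
  assumes "invertible A"
  shows "A ** matrix_inv A = mat 1"
  using assms unfolding matrix_inv_def invertible_def
  by (metis (mono_tags, lifting) someI_ex)

lemma herm_mult_zero_forcing:
  fixes H :: "complex^'k::finite^'n::finite"
  assumes "rank H = CARD('k)"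
  shows "herm H ** (H ** matrix_inv (herm H ** H) ** A) = A"
proof -
  have "(herm H ** H) ** matrix_inv (herm H ** H) = mat 1"
    using invertible_gram_if_rank_eq_card_cols[OF assms]
    by (simp add: matrix_inv_right)
  then show ?thesis by (simp add: matrix_mul_assoc)
qed

lemma sinr_without_interference:
  assumes "\<And>j. j \<noteq> m \<Longrightarrow> hinner (column k H) (column j W) = 0"
  shows "sinr H W sigma2 k m = (cmod (hinner (column k H) (column m W)))\<^sup>2 / sigma2 k"
  unfolding sinr_def using assms by simp

theorem lemma1:
  fixes H :: "complex^'k::finite^'n::finite"
    and G :: "'m::finite \<Rightarrow> 'k::finite set"
    and sigma2 gamma :: "'k \<Rightarrow> real"
    and theta :: "'k \<Rightarrow> real"
    and P :: "'n \<Rightarrow> real"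
  assumes groups_disjoint: "\<And>m m'. m \<noteq> m' \<Longrightarrow> G m \<inter> G m' = {}"
    and groups_cover: "(\<Union>m. G m) = UNIV"
    and noise_pos: "\<And>k. sigma2 k > 0"
    and theta_range: "\<And>k. theta k \<in> {0..2*pi}"
    and full_rank: "rank H = CARD('k)"
  defines "A \<equiv> (\<chi> k m. if k \<in> G m
                  then complex_of_real (sqrt (gamma k * sigma2 k)) * cis (theta k)
                  else 0) :: complex^'m^'k"
  defines "W \<equiv> H ** matrix_inv (herm H ** H) ** A"
  shows "(\<exists>W'. sinr_ok H W' sigma2 gamma G)
         \<and> sinr_ok H W sigma2 gamma G
         \<and> (power_ok W P \<longrightarrow> qos_feasible H sigma2 gamma G P W)"
proof -
  have channel_gain: "hinner (column k H) (column m W) = A $ k $ m" for k m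
    using herm_mult_zero_forcing[OF full_rank, of A]
    by (simp add: W_def herm_matrix_mult_eq_hinner_columns[symmetric])
  have "gamma k \<le> sinr H W sigma2 k m" if k: "k \<in> G m" for k m
  proof -
    have "k \<notin> G j" if "j \<noteq> m" for j
      using groups_disjoint[OF that] k by blast
    (* the absolute value matters only for gamma k < 0, where sqrt is negative *)
    then have "sinr H W sigma2 k m = \<bar>gamma k * sigma2 k\<bar> / sigma2 k"
      using k by (simp add: sinr_without_interference channel_gain A_def norm_mult
          power2_eq_square real_sqrt_mult_self)
    then show ?thesis
      using noise_pos[of k] by (simp add: abs_mult)
  qed
  then have "sinr_ok H W sigma2 gamma G"
    unfolding sinr_ok_def by blast
  then show ?thesis unfolding qos_feasible_def by blast
qed

end
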